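(* For every integer $t\ge1$, $s(3t,3t,3t-2)=3$.
   Context: A placement delivery array $S$-PDA$(F,K,Z)$ is an $F\times K$ array $R=(r_{j,k})$, $1\le j\le F$, $1\le k\le K$, over a finite set $S$ such that: (1) each cell is either empty or contains an element of $S$; (2) each column contains exactly $Z$ empty cells; (3) each element of $S$ occurs at most once in each row and at most once in each column; (4) if two distinct nonempty cells satisfy $r_{j_1,k_1}=r_{j_2,k_2}=t\in S$, then the cells $r_{j_1,k_2}$ and $r_{j_2,k_1}$ are empty. For integers $F,K\ge1$, $0\le Z\le F$, define $s(F,K,Z)=\min\{|S| : \text{there exists an } S\text{-PDA}(F,K,Z)\}$. *)

theory Defs
  imports Main
begin

text \<open>Symbols are taken to be natural numbers (WLOG, only the cardinality of S matters).\<close>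

definition is_PDA :: "nat \<Rightarrow> nat \<Rightarrow> nat \<Rightarrow> nat set \<Rightarrow> (nat \<Rightarrow> nat \<Rightarrow> nat option) \<Rightarrow> bool" where
  "is_PDA F K Z S R \<longleftrightarrow>
     finite S \<and>
     (\<forall>j<F. \<forall>k<K. \<forall>t. R j k = Some t \<longrightarrow> t \<in> S) \<and>
     (\<forall>k<K. card {j. j < F \<and> R j k = None} = Z) \<and>
     (\<forall>t\<in>S. \<forall>j<F. \<forall>k1<K. \<forall>k2<K. R j k1 = Some t \<and> R j k2 = Some t \<longrightarrow> k1 = k2) \<and>
     (\<forall>t\<in>S. \<forall>k<K. \<forall>j1<F. \<forall>j2<F. R j1 k = Some t \<and> R j2 k = Some t \<longrightarrow> j1 = j2) \<and>
     (\<forall>j1<F. \<forall>j2<F. \<forall>k1<K. \<forall>k2<K. \<forall>t.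
        (j1, k1) \<noteq> (j2, k2) \<and> R j1 k1 = Some t \<and> R j2 k2 = Some t \<longrightarrow>
        R j1 k2 = None \<and> R j2 k1 = None)"

definition s_PDA :: "nat \<Rightarrow> nat \<Rightarrow> nat \<Rightarrow> nat" where
  "s_PDA F K Z = (LEAST n. \<exists>S R. is_PDA F K Z S R \<and> card S = n)"

end

theory Submission
  imports Defs
begin

text \<open>Three symbols suffice: placing t copies of the 3 x 3 array with empty diagonal and symbol
  i + l - 1 in cell (i, l) along the diagonal gives a PDA(3t, 3t, 3t - 2). Two do not: each column
  has exactly two filled cells, whose symbols differ, so with symbols x and y every column contains
  x. Row uniqueness makes the rows of these x-entries distinct, and the array is square, so x also
  lies in every row. For the x-entry (a, k) and the x-entry (b, k') of another row b, the cross
  condition empties cell (b, k); thus column k has only one filled cell, a contradiction.\<close>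

lemma is_PDAI:
  assumes "finite S"
    and "\<And>j k x. j < F \<Longrightarrow> k < K \<Longrightarrow> R j k = Some x \<Longrightarrow> x \<in> S"
    and "\<And>k. k < K \<Longrightarrow> card {j. j < F \<and> R j k = None} = Z"
    and "\<And>j k1 k2 x. j < F \<Longrightarrow> k1 < K \<Longrightarrow> k2 < K \<Longrightarrow>
      R j k1 = Some x \<Longrightarrow> R j k2 = Some x \<Longrightarrow> k1 = k2"
    and "\<And>k j1 j2 x. k < K \<Longrightarrow> j1 < F \<Longrightarrow> j2 < F \<Longrightarrow>
      R j1 k = Some x \<Longrightarrow> R j2 k = Some x \<Longrightarrow> j1 = j2"
    and "\<And>j1 j2 k1 k2 x. j1 < F \<Longrightarrow> j2 < F \<Longrightarrow> k1 < K \<Longrightarrow> k2 < K \<Longrightarrow> (j1, k1) \<noteq> (j2, k2) \<Longrightarrow>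
      R j1 k1 = Some x \<Longrightarrow> R j2 k2 = Some x \<Longrightarrow> R j1 k2 = None"
  shows "is_PDA F K Z S R"
  unfolding is_PDA_def
  \<comment> \<open>the second half of the cross condition is the first one for the two cells swapped\<close>
proof (intro conjI allI ballI impI)
  fix j1 j2 k1 k2 x
  assume "j1 < F" "j2 < F" "k1 < K" "k2 < K"
    and "(j1, k1) \<noteq> (j2, k2) \<and> R j1 k1 = Some x \<and> R j2 k2 = Some x"
  then show "R j1 k2 = None" and "R j2 k1 = None"
    using assms(6)[of j1 j2 k1 k2 x] assms(6)[of j2 j1 k2 k1 x] by auto
qed (use assms in blast)+

lemma
  assumes "is_PDA F K Z S R"
  shows PDA_finite: "finite S"
    and PDA_symbol_in_S: "\<lbrakk>j < F; k < K; R j k = Some x\<rbrakk> \<Longrightarrow> x \<in> S"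
    and PDA_card_empty: "k < K \<Longrightarrow> card {j. j < F \<and> R j k = None} = Z"
    and PDA_row_unique: "\<lbrakk>j < F; k1 < K; k2 < K; R j k1 = Some x; R j k2 = Some x\<rbrakk> \<Longrightarrow> k1 = k2"
    and PDA_column_unique: "\<lbrakk>k < K; j1 < F; j2 < F; R j1 k = Some x; R j2 k = Some x\<rbrakk> \<Longrightarrow> j1 = j2"
    and PDA_cross: "\<lbrakk>j1 < F; j2 < F; k1 < K; k2 < K; (j1, k1) \<noteq> (j2, k2);
      R j1 k1 = Some x; R j2 k2 = Some x\<rbrakk> \<Longrightarrow> R j1 k2 = None"
proof -
  note P = assms[unfolded is_PDA_def]
  show "finite S" using P by (elim conjE)
  have "\<forall>j<F. \<forall>k<K. \<forall>t. R j k = Some t \<longrightarrow> t \<in> S" using P by (elim conjE)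
  then show in_S: "x \<in> S" if "j < F" "k < K" "R j k = Some x" for j k x
    using that by blast
  have "\<forall>k<K. card {j. j < F \<and> R j k = None} = Z" using P by (elim conjE)
  then show "card {j. j < F \<and> R j k = None} = Z" if "k < K" for k
    using that by blast
  have "\<forall>t\<in>S. \<forall>j<F. \<forall>k1<K. \<forall>k2<K. R j k1 = Some t \<and> R j k2 = Some t \<longrightarrow> k1 = k2"
    using P by (elim conjE)
  then show "k1 = k2" if "j < F" "k1 < K" "k2 < K" "R j k1 = Some x" "R j k2 = Some x" for j k1 k2 x
    using that in_S[OF that(1,2,4)] by blast
  have "\<forall>t\<in>S. \<forall>k<K. \<forall>j1<F. \<forall>j2<F. R j1 k = Some t \<and> R j2 k = Some t \<longrightarrow> j1 = j2"
    using P by (elim conjE)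
  then show "j1 = j2" if "k < K" "j1 < F" "j2 < F" "R j1 k = Some x" "R j2 k = Some x" for k j1 j2 x
    using that in_S[OF that(2,1,4)] by blast
  have "\<forall>j1<F. \<forall>j2<F. \<forall>k1<K. \<forall>k2<K. \<forall>t.
        (j1, k1) \<noteq> (j2, k2) \<and> R j1 k1 = Some t \<and> R j2 k2 = Some t \<longrightarrow>
        R j1 k2 = None \<and> R j2 k1 = None" using P by (elim conjE)
  then show "R j1 k2 = None" if "j1 < F" "j2 < F" "k1 < K" "k2 < K" "(j1, k1) \<noteq> (j2, k2)"
    "R j1 k1 = Some x" "R j2 k2 = Some x" for j1 j2 k1 k2 x
    using that by blast
qed

lemma PDA_card_filled:
  assumes "is_PDA F K Z S R" and "k < K"
  shows "card {j. j < F \<and> R j k \<noteq> None} = F - Z"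
proof -
  have "{j. j < F \<and> R j k \<noteq> None} = {..<F} - {j. j < F \<and> R j k = None}" by auto
  then show ?thesis
    using PDA_card_empty[OF assms] by (simp add: card_Diff_subset finite_subset subset_eq)
qed

lemma PDA_empty_le:
  assumes "is_PDA F K Z S R" and "k < K"
  shows "Z \<le> F"
proof -
  have "card {j. j < F \<and> R j k = None} \<le> card {..<F}" by (intro card_mono) auto
  then show ?thesis using PDA_card_empty[OF assms] by simp
qed

text \<open>Copies of an m x m array B along the diagonal; the number of copies is fixed only by the
  size of the array considered.\<close>

definition PDA_block_sum :: "nat \<Rightarrow> (nat \<Rightarrow> nat \<Rightarrow> nat option) \<Rightarrow> nat \<Rightarrow> nat \<Rightarrow> nat option" where
  "PDA_block_sum m B j k = (if j div m = k div m then B (j mod m) (k mod m) else None)"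

lemma PDA_block_sum_eq_Some_iff:
  "PDA_block_sum m B j k = Some x \<longleftrightarrow> j div m = k div m \<and> B (j mod m) (k mod m) = Some x"
  by (simp add: PDA_block_sum_def)

lemma nat_eq_of_div_mod_eq: "(a::nat) div m = b div m \<Longrightarrow> a mod m = b mod m \<Longrightarrow> a = b"
  by (metis div_mult_mod_eq)

lemma mod_less_of_less_mult: "(j::nat) < t * m \<Longrightarrow> j mod m < m"
  by (cases "m = 0") auto

lemma PDA_block_sum_filled:
  assumes "k < t * m"
  shows "{j. j < t * m \<and> PDA_block_sum m B j k \<noteq> None}
    = (\<lambda>i. m * (k div m) + i) ` {i. i < m \<and> B i (k mod m) \<noteq> None}"
proof (intro set_eqI iffI)
  fix j assume "j \<in> {j. j < t * m \<and> PDA_block_sum m B j k \<noteq> None}"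
  then have "j div m = k div m" "j < t * m" "B (j mod m) (k mod m) \<noteq> None"
    by (auto simp: PDA_block_sum_def split: if_splits)
  moreover have "j = m * (j div m) + j mod m" by simp
  ultimately show "j \<in> (\<lambda>i. m * (k div m) + i) ` {i. i < m \<and> B i (k mod m) \<noteq> None}"
    using mod_less_of_less_mult by (intro image_eqI[of j _ "j mod m"]) auto
next
  fix j assume "j \<in> (\<lambda>i. m * (k div m) + i) ` {i. i < m \<and> B i (k mod m) \<noteq> None}"
  then obtain i where i: "i < m" "B i (k mod m) \<noteq> None" and j: "j = m * (k div m) + i" by auto
  then have "j div m = k div m" "j mod m = i" by auto
  moreover have "j < t * m"
  proof -
    have "k div m < t" using assms by (rule less_mult_imp_div_less)
    then have "(k div m + 1) * m \<le> t * m" by (intro mult_le_mono1) simp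
    then show ?thesis using i(1) j by (simp add: algebra_simps)
  qed
  ultimately show "j \<in> {j. j < t * m \<and> PDA_block_sum m B j k \<noteq> None}"
    using i by (simp add: PDA_block_sum_def)
qed

lemma is_PDA_block_sum:
  assumes B: "is_PDA m m Z S B" and "0 < m"
  shows "is_PDA (t * m) (t * m) (t * m - m + Z) S (PDA_block_sum m B)"
proof (rule is_PDAI)
  show "finite S" using B by (rule PDA_finite)
next
  fix j k x assume "j < t * m" "k < t * m" "PDA_block_sum m B j k = Some x"
  then have "B (j mod m) (k mod m) = Some x" by (simp add: PDA_block_sum_eq_Some_iff)
  then show "x \<in> S" using \<open>0 < m\<close> by (intro PDA_symbol_in_S[OF B]) simp_all
next
  fix k assume k: "k < t * m"
  let ?filled = "{j. j < t * m \<and> PDA_block_sum m B j k \<noteq> None}"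
  have km: "k mod m < m" using \<open>0 < m\<close> by simp
  have "card ?filled = card {i. i < m \<and> B i (k mod m) \<noteq> None}"
    unfolding PDA_block_sum_filled[OF k] by (intro card_image) (simp add: inj_on_def)
  also have "\<dots> = m - Z" using PDA_card_filled[OF B km] .
  finally have "card ?filled = m - Z" .
  moreover have "{j. j < t * m \<and> PDA_block_sum m B j k = None} = {..<t * m} - ?filled" by auto
  moreover have "Z \<le> m" using PDA_empty_le[OF B km] .
  moreover have "m \<le> t * m" using k by (cases t) auto
  ultimately show "card {j. j < t * m \<and> PDA_block_sum m B j k = None} = t * m - m + Z"
    by (simp add: card_Diff_subset finite_subset subset_eq)
next
  fix j k1 k2 x
  assume "j < t * m" "k1 < t * m" "k2 < t * m"
    and "PDA_block_sum m B j k1 = Some x" "PDA_block_sum m B j k2 = Some x"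
  then have blocks: "k1 div m = k2 div m"
    and cells: "B (j mod m) (k1 mod m) = Some x" "B (j mod m) (k2 mod m) = Some x"
    by (simp_all add: PDA_block_sum_eq_Some_iff)
  have "k1 mod m = k2 mod m"
    by (rule PDA_row_unique[OF B, of "j mod m" _ _ x]) (simp_all add: cells \<open>0 < m\<close>)
  with blocks show "k1 = k2" by (rule nat_eq_of_div_mod_eq)
next
  fix k j1 j2 x
  assume "k < t * m" "j1 < t * m" "j2 < t * m"
    and "PDA_block_sum m B j1 k = Some x" "PDA_block_sum m B j2 k = Some x"
  then have blocks: "j1 div m = j2 div m"
    and cells: "B (j1 mod m) (k mod m) = Some x" "B (j2 mod m) (k mod m) = Some x"
    by (simp_all add: PDA_block_sum_eq_Some_iff)
  have "j1 mod m = j2 mod m"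
    by (rule PDA_column_unique[OF B, of "k mod m" _ _ x]) (simp_all add: cells \<open>0 < m\<close>)
  with blocks show "j1 = j2" by (rule nat_eq_of_div_mod_eq)
next
  fix j1 j2 k1 k2 x
  assume bounds: "j1 < t * m" "j2 < t * m" "k1 < t * m" "k2 < t * m" and ne: "(j1, k1) \<noteq> (j2, k2)"
    and x: "PDA_block_sum m B j1 k1 = Some x" "PDA_block_sum m B j2 k2 = Some x"
  show "PDA_block_sum m B j1 k2 = None"
  proof (cases "j1 div m = j2 div m")
    case False
    then show ?thesis using x by (auto simp: PDA_block_sum_def split: if_splits)
  next
    case True
    from x have blocks: "j1 div m = k1 div m" "j2 div m = k2 div m"
      and B12: "B (j1 mod m) (k1 mod m) = Some x" "B (j2 mod m) (k2 mod m) = Some x"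
      by (simp_all add: PDA_block_sum_eq_Some_iff)
    have cells_ne: "(j1 mod m, k1 mod m) \<noteq> (j2 mod m, k2 mod m)"
    proof
      assume "(j1 mod m, k1 mod m) = (j2 mod m, k2 mod m)"
      then have jm: "j1 mod m = j2 mod m" and km: "k1 mod m = k2 mod m" by simp_all
      have "k1 div m = k2 div m" using True blocks by simp
      then have "k1 = k2" using km by (rule nat_eq_of_div_mod_eq)
      moreover have "j1 = j2" using True jm by (rule nat_eq_of_div_mod_eq)
      ultimately show False using ne by simp
    qed
    have "B (j1 mod m) (k2 mod m) = None"
      by (rule PDA_cross[OF B, of _ "j2 mod m" "k1 mod m" _ x]) (use cells_ne B12 \<open>0 < m\<close> in auto)
    then show ?thesis by (simp add: PDA_block_sum_def)
  qed
qed

definition PDA_3_3_1 :: "nat \<Rightarrow> nat \<Rightarrow> nat option" where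
  "PDA_3_3_1 i l = (if i = l then None else Some (i + l - 1))"

lemma is_PDA_3_3_1: "is_PDA 3 3 1 {0, 1, 2} PDA_3_3_1"
proof (rule is_PDAI)
  fix k :: nat assume "k < 3"
  then have "{j. j < 3 \<and> PDA_3_3_1 j k = None} = {k}" by (auto simp: PDA_3_3_1_def)
  then show "card {j. j < 3 \<and> PDA_3_3_1 j k = None} = 1" by simp
qed (auto simp: PDA_3_3_1_def split: if_splits)

lemma PDA_column_two_symbols:
  assumes P: "is_PDA F K (F - 2) S R" and "2 \<le> F" and k: "k < K"
  obtains a b x y where "a < F" "b < F" "a \<noteq> b" "R a k = Some x" "R b k = Some y" "x \<noteq> y"
proof -
  have "card {j. j < F \<and> R j k \<noteq> None} = 2"
    using PDA_card_filled[OF P k] \<open>2 \<le> F\<close> by simp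
  then obtain a b where ab: "{j. j < F \<and> R j k \<noteq> None} = {a, b}" "a \<noteq> b"
    by (auto simp: card_2_iff)
  then have "a < F" "b < F" and filled: "R a k \<noteq> None" "R b k \<noteq> None" by auto
  moreover obtain x y where "R a k = Some x" "R b k = Some y" using filled by auto
  moreover have "x \<noteq> y"
    using PDA_column_unique[OF P k \<open>a < F\<close> \<open>b < F\<close>] ab(2) calculation by blast
  ultimately show thesis using ab(2) that by blast
qed

lemma PDA_symbol_in_all_columns_in_all_rows:
  assumes P: "is_PDA F F Z S R" and cols: "\<forall>k<F. \<exists>j<F. R j k = Some x" and "j < F"
  shows "\<exists>k<F. R j k = Some x"
proof -
  define r where "r k = (SOME j. j < F \<and> R j k = Some x)" for k
  have r: "r k < F \<and> R (r k) k = Some x" if k: "k < F" for k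
  proof -
    obtain j where "j < F \<and> R j k = Some x" using cols k by blast
    then show ?thesis unfolding r_def by (rule someI)
  qed
  have "inj_on r {..<F}"
  proof (rule inj_onI)
    fix k1 k2 assume k12: "k1 \<in> {..<F}" "k2 \<in> {..<F}" and "r k1 = r k2"
    then have "r k1 < F" "R (r k1) k1 = Some x" "R (r k1) k2 = Some x"
      using r[of k1] r[of k2] by auto
    then show "k1 = k2" using PDA_row_unique[OF P] k12 by blast
  qed
  moreover have "r ` {..<F} \<subseteq> {..<F}" using r by auto
  ultimately have "r ` {..<F} = {..<F}" by (simp add: endo_inj_surj)
  then obtain k where "k < F" "r k = j" using \<open>j < F\<close> by (metis imageE lessThan_iff)
  then show ?thesis using r by blast
qed

lemma PDA_symbol_in_all_rows_column_single:
  assumes P: "is_PDA F K Z S R" and rows: "\<forall>j<F. \<exists>k<K. R j k = Some x"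
    and "a < F" "b < F" "k < K" "R a k = Some x" "R b k \<noteq> None"
  shows "b = a"
proof -
  obtain k' where k': "k' < K" "R b k' = Some x" using rows \<open>b < F\<close> by blast
  show ?thesis
  proof (cases "k' = k")
    case True
    then show ?thesis using PDA_column_unique[OF P] k' assms(3-6) by blast
  next
    case False
    then have "R b k = None" using PDA_cross[OF P] k' assms(3-6) by blast
    then show ?thesis using \<open>R b k \<noteq> None\<close> by simp
  qed
qed

lemma PDA_square_two_filled_card_ge_3:
  assumes P: "is_PDA F F (F - 2) S R" and "2 \<le> F"
  shows "3 \<le> card S"
proof (rule ccontr)
  assume "\<not> 3 \<le> card S"
  have "0 < F" using \<open>2 \<le> F\<close> by simp
  obtain a b x y where ab: "a < F" "b < F" "a \<noteq> b" "R a 0 = Some x" "R b 0 = Some y" "x \<noteq> y"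
    using PDA_column_two_symbols[OF P \<open>2 \<le> F\<close> \<open>0 < F\<close>] .
  have "{x, y} \<subseteq> S" using ab PDA_symbol_in_S[OF P] \<open>0 < F\<close> by blast
  moreover have "card S \<le> card {x, y}" using \<open>\<not> 3 \<le> card S\<close> ab(6) by simp
  ultimately have S: "S = {x, y}" using PDA_finite[OF P] by (metis card_seteq)
  have "\<exists>j<F. R j k = Some x" if "k < F" for k
  proof -
    obtain a' b' x' y' where "a' < F" "b' < F" "R a' k = Some x'" "R b' k = Some y'" "x' \<noteq> y'"
      using PDA_column_two_symbols[OF P \<open>2 \<le> F\<close> \<open>k < F\<close>] .
    moreover have "x' \<in> {x, y}" "y' \<in> {x, y}"
      using calculation PDA_symbol_in_S[OF P] \<open>k < F\<close> S by blast+
    ultimately show ?thesis by blast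
  qed
  then have "\<forall>j<F. \<exists>k<F. R j k = Some x"
    using PDA_symbol_in_all_columns_in_all_rows[OF P] by blast
  then have "b = a"
    using PDA_symbol_in_all_rows_column_single[OF P] ab \<open>0 < F\<close> by blast
  then show False using ab(3) by simp
qed

theorem mainTheorem18:
  fixes t :: nat
  assumes "t \<ge> 1"
  shows "s_PDA (3 * t) (3 * t) (3 * t - 2) = 3"
  unfolding s_PDA_def
proof (rule Least_equality)
  have "t * 3 - 3 + 1 = 3 * t - 2" using assms by simp
  then have "is_PDA (3 * t) (3 * t) (3 * t - 2) {0, 1, 2} (PDA_block_sum 3 PDA_3_3_1)"
    using is_PDA_block_sum[OF is_PDA_3_3_1, of t] by (simp add: mult.commute)
  then show "\<exists>S R. is_PDA (3 * t) (3 * t) (3 * t - 2) S R \<and> card S = 3" by fastforce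
next
  fix n assume "\<exists>S R. is_PDA (3 * t) (3 * t) (3 * t - 2) S R \<and> card S = n"
  then obtain S R where "is_PDA (3 * t) (3 * t) (3 * t - 2) S R" "card S = n" by blast
  moreover have "2 \<le> 3 * t" using assms by simp
  ultimately show "3 \<le> n" using PDA_square_two_filled_card_ge_3 by blast
qed

end
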